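(* Let $N\ge3$, $\frac{N}{N-1}<p<2$, $\xi=(p-1)(N-1)$, $\beta=\frac{p-1}{\xi-1}$, $\sigma=\frac{2-p}{p-1}$, and let $\kappa$ be a non-negative continuous function on $\overline{B_1}$ with $\kappa(0)=0$. There is a constant $C>0$ such that for all $R\in(0,1)$, $\delta\in(0,1)$, $t>1$ and all $\varphi\in X$ with $\|\varphi\|_X\le R$: (1) $\big\|\kappa\,|\nabla w_t+\nabla\varphi|^p\big\|_Y\le C\Big(R^p+\sup_{|z|<\delta}|\kappa(z)|+\dfrac{1}{t^{\frac{p}{p-1}}\delta^{(N-1)p-\sigma-2}}\Big)$; (2) $\big\||\nabla w_t+\nabla\varphi|^p-|\nabla w_t|^p-p|\nabla w_t|^{p-2}\nabla w_t\cdot\nabla\varphi\big\|_Y\le CR^p$. (In the paper this is stated for both $\kappa=\kappa_1$ and $\kappa=\kappa_2$.)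
   Context: $B_1$ is the open unit ball of $\mathbb{R}^N$. $w_t(x)=\int_{|x|}^1\frac{dy}{(ty^{\xi}+\beta y)^{1/(p-1)}}$. $\|\varphi\|_X=\sup_{0<|x|\le1}\{|x|^{\sigma}|\varphi(x)|+|x|^{\sigma+1}|\nabla\varphi(x)|\}$, $\|f\|_Y=\sup_{0<|x|\le1}|x|^{\sigma+2}|f(x)|$; $X$ is the set of functions on $\overline{B_1}\setminus\{0\}$ with finite $X$-norm vanishing on $\partial B_1$. *)

theory Defs
  imports "HOL-Analysis.Analysis"
begin

definition xi :: "real \<Rightarrow> real \<Rightarrow> real" where
  "xi N p = (p - 1) * (N - 1)"

definition beta :: "real \<Rightarrow> real \<Rightarrow> real" where
  "beta N p = (p - 1) / (xi N p - 1)"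

definition sigma :: "real \<Rightarrow> real" where
  "sigma p = (2 - p) / (p - 1)"

definition punct :: "'a::euclidean_space set" where
  "punct = cball 0 1 - {0}"

definition grad :: "('a::euclidean_space \<Rightarrow> real) \<Rightarrow> 'a \<Rightarrow> 'a" where
  "grad f x = (\<Sum>b\<in>Basis. frechet_derivative f (at x within punct) b *\<^sub>R b)"

definition w :: "real \<Rightarrow> real \<Rightarrow> 'a::euclidean_space \<Rightarrow> real" where
  "w p t x = integral {norm x..1}
      (\<lambda>y. 1 / (t * y powr xi (real DIM('a)) p + beta (real DIM('a)) p * y) powr (1 / (p - 1)))"

definition normX :: "real \<Rightarrow> ('a::euclidean_space \<Rightarrow> real) \<Rightarrow> real" where
  "normX p \<phi> = (SUP x\<in>punct. norm x powr sigma p * \<bar>\<phi> x\<bar>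
                    + norm x powr (sigma p + 1) * norm (grad \<phi> x))"

definition inX :: "real \<Rightarrow> ('a::euclidean_space \<Rightarrow> real) \<Rightarrow> bool" where
  "inX p \<phi> \<longleftrightarrow> (\<forall>x\<in>punct. \<phi> differentiable (at x within punct))
     \<and> bdd_above ((\<lambda>x. norm x powr sigma p * \<bar>\<phi> x\<bar>
                    + norm x powr (sigma p + 1) * norm (grad \<phi> x)) ` punct)
     \<and> (\<forall>x. norm x = 1 \<longrightarrow> \<phi> x = 0)"

definition normY :: "real \<Rightarrow> ('a::euclidean_space \<Rightarrow> real) \<Rightarrow> real" where
  "normY p f = (SUP x\<in>punct. norm x powr (sigma p + 2) * \<bar>f x\<bar>)"

definition inY :: "real \<Rightarrow> ('a::euclidean_space \<Rightarrow> real) \<Rightarrow> bool" where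
  "inY p f \<longleftrightarrow> bdd_above ((\<lambda>x. norm x powr (sigma p + 2) * \<bar>f x\<bar>) ` punct)"

end

theory Submission
  imports Defs
begin

text \<open>
  Write F(a, b) = |a + b|^p - |a|^p - p |a|^(p-2) (a . b). Tangent-line inequalities for the
  convex map s \<mapsto> s^p and the concave map s \<mapsto> s^(p/2) give 0 \<le> F(a, b) \<le> 6 |b|^p
  for 1 \<le> p \<le> 2; together with |a + b|^p \<le> 2^p (|a|^p + |b|^p) this reduces both estimates
  to bounds on |x|^(\<sigma>+2) |\<nabla>w_t|^p and |x|^(\<sigma>+2) |\<nabla>\<phi>|^p. Since
  \<sigma> + 2 = (\<sigma> + 1) p = p/(p-1), the X-norm bounds the latter by R^p. The function w_t is
  radial with |\<nabla>w_t(x)| = (t |x|^\<xi> + \<beta> |x|)^(-1/(p-1)), so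
  |x|^(\<sigma>+2) |\<nabla>w_t|^p = (t |x|^(\<xi>-1) + \<beta>)^(-p/(p-1)). This is at most
  \<beta>^(-p/(p-1)) everywhere, and at most (t \<delta>^(\<xi>-1))^(-p/(p-1)) where |x| \<ge> \<delta>,
  because \<xi> > 1. In (1) the first bound is used on B_\<delta>, where \<kappa> is at most its supremum
  over B_\<delta>, and the second one outside.
\<close>

section \<open>Elementary inequalities for powers of norms\<close>

lemma powr_ge_tangent:
  fixes p r u :: real
  assumes "1 \<le> p" "0 < r" "0 \<le> u"
  shows "r powr p + p * r powr (p - 1) * (u - r) \<le> u powr p"
proof (cases "u = 0")
  case True
  moreover have "r * r powr (p - 1) = r powr p"
    using assms by (simp add: powr_mult_base)
  ultimately show ?thesis
    using assms by (simp add: algebra_simps)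
next
  case False
  have "(r powr p) powr ((p - 1) / p) * (u powr p) powr (1 / p)
        \<le> (p - 1) / p * r powr p + 1 / p * u powr p"
    using Youngs_inequality_0[of "(p - 1) / p" "1 / p" "r powr p" "u powr p"] assms False
    by (simp add: diff_divide_distrib)
  then have "r powr (p - 1) * u \<le> (p - 1) / p * r powr p + 1 / p * u powr p"
    using assms False by (simp add: powr_powr)
  then have "p * r powr (p - 1) * u \<le> (p - 1) * r powr p + u powr p"
    using assms by (simp add: field_simps)
  moreover have "r powr (p - 1) * r = r powr p"
    using assms by (simp add: powr_mult_base mult.commute)
  ultimately show ?thesis
    by (simp add: algebra_simps)
qed

lemma powr_le_tangent:
  fixes q r x :: real
  assumes "0 \<le> q" "q \<le> 1" "0 < r" "0 \<le> x"
  shows "x powr q \<le> r powr q + q * r powr (q - 1) * (x - r)"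
proof (cases "x = 0")
  case True
  moreover have "r * r powr (q - 1) = r powr q"
    using assms by (simp add: powr_mult_base)
  ultimately show ?thesis
    using assms by (simp add: algebra_simps)
next
  case False
  have "x powr q * r powr (1 - q) \<le> q * x + (1 - q) * r"
    using Youngs_inequality_0[of q "1 - q" x r] assms False by simp
  then have "x powr q * r powr (1 - q) * r powr (q - 1) \<le> (q * x + (1 - q) * r) * r powr (q - 1)"
    by (simp add: mult_right_mono)
  moreover have "r powr (1 - q) * r powr (q - 1) = 1"
    using assms by (simp flip: powr_add)
  moreover have "r * r powr (q - 1) = r powr q"
    using assms by (simp add: powr_mult_base)
  ultimately show ?thesis
    by (simp add: algebra_simps)
qed

lemma norm_add_powr_ge:
  fixes a b :: "'a::real_inner"
  assumes "1 \<le> p"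
  shows "norm a powr p + p * norm a powr (p - 2) * (a \<bullet> b) \<le> norm (a + b) powr p"
proof (cases "a = 0")
  case False
  define r u where "r = norm a" and "u = norm (a + b)"
  have r: "0 < r" using False by (simp add: r_def)
  have "a \<bullet> b = a \<bullet> (a + b) - r\<^sup>2"
    by (simp add: r_def inner_add_right power2_norm_eq_inner)
  also have "\<dots> \<le> r * u - r\<^sup>2"
    using norm_cauchy_schwarz[of a "a + b"] by (simp add: r_def u_def)
  finally have "p * r powr (p - 2) * (a \<bullet> b) \<le> p * r powr (p - 2) * (r * u - r\<^sup>2)"
    using assms by (intro mult_left_mono) auto
  also have "\<dots> = p * r powr (p - 1) * (u - r)"
    using r powr_mult_base[of r "p - 2"] by (simp add: power2_eq_square algebra_simps)
  finally show ?thesis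
    using powr_ge_tangent[OF assms r, of u] by (simp add: r_def u_def)
qed simp

lemma norm_add_powr_remainder_le_of_norm_le:
  fixes a b :: "'a::real_inner"
  assumes "0 \<le> p" "p \<le> 2" and ba: "norm b \<le> norm a"
  shows "norm (a + b) powr p - norm a powr p - p * norm a powr (p - 2) * (a \<bullet> b) \<le> norm b powr p"
proof (cases "b = 0")
  case False
  define r where "r = norm a"
  have b: "0 < norm b" and r: "0 < r\<^sup>2"
    using False ba by (auto simp: r_def)
  have sq: "(norm (a + b))\<^sup>2 - r\<^sup>2 = 2 * (a \<bullet> b) + (norm b)\<^sup>2"
    by (simp add: r_def power2_norm_eq_inner inner_add_left inner_add_right inner_commute)
  \<comment> \<open>concavity of \<open>s \<mapsto> s powr (p/2)\<close> at \<open>s = r\<^sup>2\<close>\<close>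
  have "norm (a + b) powr p = ((norm (a + b))\<^sup>2) powr (p / 2)"
    by (simp add: powr_powr flip: powr_numeral)
  also have "\<dots> \<le> (r\<^sup>2) powr (p / 2)
      + p / 2 * (r\<^sup>2) powr (p / 2 - 1) * (2 * (a \<bullet> b) + (norm b)\<^sup>2)"
    using powr_le_tangent[of "p / 2" "r\<^sup>2" "(norm (a + b))\<^sup>2"] assms r by (simp add: sq)
  also have "\<dots> = norm a powr p + p * norm a powr (p - 2) * (a \<bullet> b)
      + p / 2 * r powr (p - 2) * (norm b)\<^sup>2"
    by (simp add: r_def powr_powr algebra_simps flip: powr_numeral)
  finally have "norm (a + b) powr p - norm a powr p - p * norm a powr (p - 2) * (a \<bullet> b)
      \<le> p / 2 * (r powr (p - 2) * (norm b)\<^sup>2)"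
    by simp
  also have "\<dots> \<le> r powr (p - 2) * (norm b)\<^sup>2"
    using assms by (intro mult_left_le_one_le) auto
  also have "\<dots> \<le> norm b powr (p - 2) * (norm b)\<^sup>2"
    using assms b by (intro mult_right_mono powr_mono2') (auto simp: r_def)
  also have "\<dots> = norm b powr p"
    using b by (simp flip: powr_add powr_numeral)
  finally show ?thesis .
qed (use ba in simp)

lemma norm_add_powr_le:
  fixes a b :: "'a::real_normed_vector"
  assumes "0 \<le> p"
  shows "norm (a + b) powr p \<le> 2 powr p * (norm a powr p + norm b powr p)"
proof -
  define m where "m = max (norm a) (norm b)"
  have "norm (a + b) powr p \<le> (2 * m) powr p"
    using norm_triangle_ineq[of a b] assms by (intro powr_mono2) (auto simp: m_def)
  also have "\<dots> = 2 powr p * m powr p"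
    by (simp add: m_def powr_mult)
  also have "m powr p \<le> norm a powr p + norm b powr p"
    by (simp add: m_def max_def)
  finally show ?thesis
    by simp
qed

lemma norm_add_powr_remainder_bound:
  fixes a b :: "'a::real_inner"
  assumes p: "1 \<le> p" "p \<le> 2"
  shows "\<bar>norm (a + b) powr p - norm a powr p - p * norm a powr (p - 2) * (a \<bullet> b)\<bar>
    \<le> 6 * norm b powr p"
proof -
  have "norm (a + b) powr p - norm a powr p - p * norm a powr (p - 2) * (a \<bullet> b) \<le> 6 * norm b powr p"
  proof (cases "norm b \<le> norm a")
    case True
    then show ?thesis
      using norm_add_powr_remainder_le_of_norm_le[OF _ p(2) True] p powr_ge_zero[of "norm b" p]
      by linarith
  next
    case False
    have "norm (a + b) powr p \<le> (2 * norm b) powr p"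
      using norm_triangle_ineq[of a b] False p by (intro powr_mono2) auto
    also have "\<dots> \<le> 4 * norm b powr p"
      using powr_mono[of p 2 2] p by (simp add: powr_mult mult_right_mono)
    finally have sum_le: "norm (a + b) powr p \<le> 4 * norm b powr p" .
    have "- (a \<bullet> b) \<le> norm a * norm b"
      using Cauchy_Schwarz_ineq2[of a b] by linarith
    then have "p * norm a powr (p - 2) * (- (a \<bullet> b)) \<le> p * norm a powr (p - 2) * (norm a * norm b)"
      using p by (intro mult_left_mono) auto
    then have "- (p * norm a powr (p - 2) * (a \<bullet> b)) \<le> p * norm a powr (p - 2) * (norm a * norm b)"
      by simp
    also have "\<dots> = p * norm a powr (p - 1) * norm b"
      using powr_mult_base[of "norm a" "p - 2"] by (simp add: algebra_simps)
    also have "\<dots> \<le> p * norm b powr (p - 1) * norm b"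
      using False p by (intro mult_right_mono mult_left_mono powr_mono2) auto
    also have "\<dots> = p * norm b powr p"
      using powr_mult_base[of "norm b" "p - 1"] by (simp add: algebra_simps)
    also have "\<dots> \<le> 2 * norm b powr p"
      using p by (intro mult_right_mono) auto
    finally show ?thesis
      using sum_le powr_ge_zero[of "norm a" p] by linarith
  qed
  moreover have "0 \<le> norm (a + b) powr p - norm a powr p - p * norm a powr (p - 2) * (a \<bullet> b)"
    using norm_add_powr_ge[OF p(1), of a b] by simp
  ultimately show ?thesis
    by simp
qed

section \<open>Gradients relative to the punctured closed ball\<close>

lemma has_derivative_within_unique_along_ray:
  fixes f :: "'a::real_normed_vector \<Rightarrow> 'b::real_normed_vector"
  assumes D1: "(f has_derivative D1) (at x within S)" and D2: "(f has_derivative D2) (at x within S)"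
    and "0 < e" and ray: "\<And>d. 0 < d \<Longrightarrow> d < e \<Longrightarrow> x + d *\<^sub>R v \<in> S"
  shows "D1 v = D2 v"
proof -
  define g where "g = (\<lambda>d::real. x + d *\<^sub>R v)"
  have g: "(g has_derivative (\<lambda>d. d *\<^sub>R v)) (at 0 within {0<..<e})"
    unfolding g_def by (auto intro!: derivative_eq_intros)
  have "g ` {0<..<e} \<subseteq> S" and "g 0 = x"
    using ray by (auto simp: g_def)
  then have "((f \<circ> g) has_derivative D1 \<circ> (\<lambda>d. d *\<^sub>R v)) (at 0 within {0<..<e})"
    and "((f \<circ> g) has_derivative D2 \<circ> (\<lambda>d. d *\<^sub>R v)) (at 0 within {0<..<e})"
    using D1 D2 by (auto intro!: diff_chain_within[OF g] elim: has_derivative_subset)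
  then have "D1 \<circ> (\<lambda>d. d *\<^sub>R v) = D2 \<circ> (\<lambda>d. d *\<^sub>R v)"
  proof (rule frechet_derivative_unique_within)
    fix i e' :: real
    assume "0 < e'" "i \<in> Basis"
    then show "\<exists>d. 0 < \<bar>d\<bar> \<and> \<bar>d\<bar> < e' \<and> 0 + d *\<^sub>R i \<in> {0<..<e}"
      using \<open>0 < e\<close> by (intro exI[of _ "min e e' / 2"]) auto
  qed
  then show ?thesis
    by (metis comp_apply scaleR_one)
qed

lemma linear_eq_on_open_halfspace:
  fixes D1 D2 :: "'a::real_inner \<Rightarrow> 'b::real_vector"
  assumes "linear D1" "linear D2" "x \<noteq> 0"
    and eq: "\<And>v. x \<bullet> v < 0 \<Longrightarrow> D1 v = D2 v"
  shows "D1 = D2"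
proof
  fix v
  have x: "D1 x = D2 x"
    using eq[of "- x"] assms by (simp add: linear_neg)
  define c where "c = (\<bar>x \<bullet> v\<bar> + 1) / (norm x)\<^sup>2"
  have "x \<bullet> (v - c *\<^sub>R x) = x \<bullet> v - (\<bar>x \<bullet> v\<bar> + 1)"
    using assms by (simp add: c_def inner_diff_right power2_norm_eq_inner)
  then have "D1 (v - c *\<^sub>R x) = D2 (v - c *\<^sub>R x)"
    by (intro eq) linarith
  then show "D1 v = D2 v"
    using x assms by (simp add: linear_diff linear_scale)
qed

text \<open>
  At points of the unit sphere the coordinate directions may leave the ball in both senses, so
  \<open>frechet_derivative_unique_within\<close> does not apply; the open half-space of inward
  directions is enough.
\<close>

lemma has_derivative_within_punct_unique:
  fixes f :: "'a::euclidean_space \<Rightarrow> real"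
  assumes x: "x \<in> punct"
    and D1: "(f has_derivative D1) (at x within punct)" and D2: "(f has_derivative D2) (at x within punct)"
  shows "D1 = D2"
proof (rule linear_eq_on_open_halfspace)
  show "linear D1" "linear D2"
    using D1 D2 by (auto simp: has_derivative_def bounded_linear.linear)
  show x0: "x \<noteq> 0"
    using x by (simp add: punct_def)
  fix v
  assume xv: "x \<bullet> v < 0"
  then have v: "v \<noteq> 0"
    by auto
  define e where "e = min (- 2 * (x \<bullet> v) / (norm v)\<^sup>2) (norm x / norm v)"
  have "0 < - 2 * (x \<bullet> v) / (norm v)\<^sup>2"
    using v xv by (intro divide_pos_pos) auto
  then have "0 < e"
    using v x0 by (auto simp: e_def)
  then show "D1 v = D2 v"
  proof (rule has_derivative_within_unique_along_ray[OF D1 D2])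
    fix d :: real
    assume d: "0 < d" "d < e"
    \<comment> \<open>moving against \<open>x\<close> shrinks the norm, but not down to \<open>0\<close>\<close>
    have "d < - 2 * (x \<bullet> v) / (norm v)\<^sup>2"
      using d by (simp add: e_def)
    then have "d * (norm v)\<^sup>2 < - 2 * (x \<bullet> v)"
      using v by (subst (asm) pos_less_divide_eq) auto
    then have "d * (d * (norm v)\<^sup>2) < d * (- 2 * (x \<bullet> v))"
      using d by (intro mult_strict_left_mono) auto
    then have "(norm (x + d *\<^sub>R v))\<^sup>2 < (norm x)\<^sup>2"
      by (simp add: power2_norm_eq_inner inner_add_left inner_add_right inner_commute algebra_simps)
    then have "norm (x + d *\<^sub>R v) < norm x"
      by (rule power_less_imp_less_base) simp
    then have "norm (x + d *\<^sub>R v) \<le> 1"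
      using x by (simp add: punct_def)
    moreover have "norm (d *\<^sub>R v) < norm x"
      using d v by (auto simp: e_def pos_less_divide_eq)
    then have "x + d *\<^sub>R v \<noteq> 0"
      by (metis add_eq_0_iff norm_minus_cancel order_less_irrefl)
    ultimately show "x + d *\<^sub>R v \<in> punct"
      by (simp add: punct_def)
  qed
qed

lemma grad_eq:
  fixes f :: "'a::euclidean_space \<Rightarrow> real"
  assumes "x \<in> punct" and "(f has_derivative (\<lambda>h. h \<bullet> u)) (at x within punct)"
  shows "grad f x = u"
proof -
  have "frechet_derivative f (at x within punct) = (\<lambda>h. h \<bullet> u)"
    using assms by (metis differentiableI frechet_derivative_works has_derivative_within_punct_unique)
  then have "grad f x = (\<Sum>b\<in>Basis. (u \<bullet> b) *\<^sub>R b)"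
    by (simp add: grad_def inner_commute)
  then show ?thesis
    by (simp add: euclidean_representation)
qed

lemma grad_radial_integral:
  fixes g :: "real \<Rightarrow> real" and x :: "'a::euclidean_space"
  assumes g: "continuous_on {0<..} g" and x: "x \<in> punct"
  shows "grad (\<lambda>y. integral {norm y..1} g) x = - g (norm x) *\<^sub>R sgn x"
proof (rule grad_eq[OF x])
  have G: "((\<lambda>s. integral {s..1} g) has_real_derivative - g s) (at s within {0<..1})"
    if "s \<in> {0<..1}" for s
  proof -
    have s: "0 < s" "s \<le> 1"
      using that by auto
    have "continuous_on {s/2..1} g"
      using s by (intro continuous_on_subset[OF g]) auto
    then have "((\<lambda>s. integral {s..1} g) has_real_derivative - g s) (at s within {s/2..1})"
      by (rule integral_has_real_derivative') (use s in auto)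
    moreover have "at s within {s/2..1} = at s within {0<..1}"
      using s by (intro at_within_nhd[of _ "{s/2<..}"]) auto
    ultimately show ?thesis
      by simp
  qed
  have "norm ` punct \<subseteq> {0<..1::real}"
    by (auto simp: punct_def)
  moreover have "(norm has_derivative (\<lambda>h. h \<bullet> sgn x)) (at x within punct)"
    using x by (intro has_derivative_norm[THEN has_derivative_at_withinI]) (simp add: punct_def)
  ultimately have "((\<lambda>y. integral {norm y..1} g) has_derivative (\<lambda>h. - g (norm x) * (h \<bullet> sgn x)))
      (at x within punct)"
    using has_derivative_in_compose2[OF G[unfolded has_field_derivative_def] _ x] by blast
  then show "((\<lambda>y. integral {norm y..1} g) has_derivative (\<lambda>h. h \<bullet> (- g (norm x) *\<^sub>R sgn x)))
      (at x within punct)"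
    by (simp only: inner_scaleR_right)
qed

section \<open>The radial function \<open>w\<close>\<close>

lemma one_lt_xi:
  fixes N p :: real
  assumes "1 < N" "N / (N - 1) < p"
  shows "1 < p" and "1 < xi N p" and "0 < beta N p"
proof -
  have N: "0 < N - 1"
    using assms by simp
  then have "N < p * (N - 1)"
    using assms(2) by (simp add: pos_divide_less_eq)
  then show "1 < xi N p"
    by (simp add: xi_def algebra_simps)
  have "(N - 1) * 1 < (N - 1) * p"
    using \<open>N < p * (N - 1)\<close> by (simp add: algebra_simps)
  then show "1 < p"
    using N by (simp only: mult_less_cancel_left_pos)
  then show "0 < beta N p"
    using \<open>1 < xi N p\<close> by (simp add: beta_def)
qed

lemma sigma_add_two: "p \<noteq> 1 \<Longrightarrow> sigma p + 2 = p / (p - 1)"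
  by (simp add: sigma_def field_simps)

lemma norm_grad_w:
  fixes x :: "'a::euclidean_space"
  defines "N \<equiv> real DIM('a)"
  assumes x: "x \<in> punct" and t: "0 < t" and \<beta>: "0 < beta N p"
  shows "norm (grad (w p t) x) = 1 / (t * norm x powr xi N p + beta N p * norm x) powr (1 / (p - 1))"
proof -
  define g where "g = (\<lambda>y. 1 / (t * y powr xi N p + beta N p * y) powr (1 / (p - 1)))"
  have pos: "0 < t * y powr xi N p + beta N p * y" if "0 < y" for y
    using t \<beta> that by (simp add: add_nonneg_pos)
  have "continuous_on {0<..} g"
    unfolding g_def by (intro continuous_intros) (auto dest: pos)
  moreover have "(w p t :: 'a \<Rightarrow> real) = (\<lambda>y. integral {norm y..1} g)"
    by (simp add: fun_eq_iff w_def g_def N_def)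
  ultimately have "grad (w p t) x = - g (norm x) *\<^sub>R sgn x"
    using grad_radial_integral x by metis
  moreover have "x \<noteq> 0"
    using x by (simp add: punct_def)
  ultimately show ?thesis
    by (simp add: norm_sgn g_def)
qed

lemma weighted_norm_grad_w:
  fixes x :: "'a::euclidean_space"
  defines "N \<equiv> real DIM('a)"
  assumes x: "x \<in> punct" and t: "0 < t" and p: "1 < p" and \<beta>: "0 < beta N p"
  shows "norm x powr (sigma p + 2) * norm (grad (w p t) x) powr p
       = 1 / (t * norm x powr (xi N p - 1) + beta N p) powr (sigma p + 2)"
proof -
  define r Q where "r = norm x" and "Q = t * r powr (xi N p - 1) + beta N p"
  have r: "0 < r" and Q: "0 < Q"
    using x t \<beta> by (auto simp: r_def Q_def punct_def add_nonneg_pos)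
  have "t * r powr xi N p + beta N p * r = r * Q"
    using r powr_mult_base[of r "xi N p - 1"] by (simp add: Q_def algebra_simps)
  then have "norm (grad (w p t) x) = 1 / (r * Q) powr (1 / (p - 1))"
    using norm_grad_w[OF x t \<beta>[unfolded N_def]] by (simp add: r_def N_def)
  then have "norm (grad (w p t) x) powr p = 1 / (r powr (p / (p - 1)) * Q powr (p / (p - 1)))"
    using r Q by (simp add: powr_divide powr_powr powr_mult)
  then show ?thesis
    using r p by (simp add: sigma_add_two r_def Q_def)
qed

lemma weighted_norm_grad_w_le:
  fixes x :: "'a::euclidean_space"
  defines "N \<equiv> real DIM('a)"
  assumes x: "x \<in> punct" and t: "0 < t" and p: "1 < p" and \<beta>: "0 < beta N p"
  shows "norm x powr (sigma p + 2) * norm (grad (w p t) x) powr p \<le> 1 / beta N p powr (sigma p + 2)"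
proof -
  have "beta N p powr (sigma p + 2) \<le> (t * norm x powr (xi N p - 1) + beta N p) powr (sigma p + 2)"
    using t p \<beta> by (intro powr_mono2) (auto simp: sigma_add_two)
  then show ?thesis
    unfolding weighted_norm_grad_w[OF x t p \<beta>[unfolded N_def]] N_def
    using \<beta> by (intro divide_left_mono mult_pos_pos) (auto simp: N_def)
qed

lemma weighted_norm_grad_w_le_away:
  fixes x :: "'a::euclidean_space"
  defines "N \<equiv> real DIM('a)"
  assumes x: "x \<in> punct" and t: "0 < t" and p: "1 < p" and \<xi>: "1 < xi N p" and \<beta>: "0 < beta N p"
    and \<delta>: "0 < \<delta>" "\<delta> \<le> norm x"
  shows "norm x powr (sigma p + 2) * norm (grad (w p t) x) powr p
       \<le> 1 / (t powr (p / (p - 1)) * \<delta> powr ((N - 1) * p - sigma p - 2))"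
proof -
  have "t * \<delta> powr (xi N p - 1) \<le> t * norm x powr (xi N p - 1) + beta N p"
    using assms by (smt (verit) mult_left_mono powr_mono2)
  then have "(t * \<delta> powr (xi N p - 1)) powr (p / (p - 1))
      \<le> (t * norm x powr (xi N p - 1) + beta N p) powr (sigma p + 2)"
    using assms by (simp add: sigma_add_two powr_mono2)
  moreover have "(t * \<delta> powr (xi N p - 1)) powr (p / (p - 1))
      = t powr (p / (p - 1)) * \<delta> powr ((N - 1) * p - sigma p - 2)"
    using assms by (simp add: powr_mult powr_powr xi_def sigma_def field_simps)
  ultimately have "t powr (p / (p - 1)) * \<delta> powr ((N - 1) * p - sigma p - 2)
      \<le> (t * norm x powr (xi N p - 1) + beta N p) powr (sigma p + 2)"
    by simp
  moreover have "0 < t * norm x powr (xi N p - 1) + beta N p"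
    using t \<beta> by (simp add: add_nonneg_pos)
  ultimately show ?thesis
    unfolding weighted_norm_grad_w[OF x t p \<beta>[unfolded N_def]] N_def
    using t \<delta> by (intro divide_left_mono mult_pos_pos) auto
qed

section \<open>Weighted estimates\<close>

lemma punct_nonempty: "(punct :: 'a::euclidean_space set) \<noteq> {}"
proof -
  obtain b :: 'a where "b \<in> Basis"
    using nonempty_Basis by blast
  then have "b \<in> punct"
    by (simp add: punct_def nonzero_Basis)
  then show ?thesis
    by blast
qed

lemma inY_normY_le:
  fixes f :: "'a::euclidean_space \<Rightarrow> real"
  assumes "\<And>x. x \<in> punct \<Longrightarrow> norm x powr (sigma p + 2) * \<bar>f x\<bar> \<le> M"
  shows "inY p f \<and> normY p f \<le> M"
  unfolding inY_def normY_def using assms punct_nonempty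
  by (metis (mono_tags, lifting) bdd_aboveI2 cSUP_least)

lemma weighted_norm_grad_powr_le_normX:
  fixes \<phi> :: "'a::euclidean_space \<Rightarrow> real"
  assumes \<phi>: "inX p \<phi>" "normX p \<phi> \<le> R" and x: "x \<in> punct" and p: "1 < p"
  shows "norm x powr (sigma p + 2) * norm (grad \<phi> x) powr p \<le> R powr p"
proof -
  have "norm x powr sigma p * \<bar>\<phi> x\<bar> + norm x powr (sigma p + 1) * norm (grad \<phi> x) \<le> normX p \<phi>"
    unfolding normX_def using \<phi> x by (intro cSUP_upper) (auto simp: inX_def)
  then have "norm x powr (sigma p + 1) * norm (grad \<phi> x) \<le> R"
    using \<phi> by (smt (verit) abs_ge_zero powr_ge_zero zero_le_mult_iff)
  then have "(norm x powr (sigma p + 1) * norm (grad \<phi> x)) powr p \<le> R powr p"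
    using p by (intro powr_mono2) auto
  moreover have "(sigma p + 1) * p = sigma p + 2"
    using p by (simp add: sigma_def field_simps)
  ultimately show ?thesis
    by (simp add: powr_mult powr_powr)
qed

lemma weighted_norm_add_powr_remainder_le:
  fixes \<phi> :: "'a::euclidean_space \<Rightarrow> real" and a :: 'a
  assumes "inX p \<phi>" "normX p \<phi> \<le> R" "x \<in> punct" "1 < p" "p \<le> 2"
  shows "norm x powr (sigma p + 2) * \<bar>norm (a + grad \<phi> x) powr p - norm a powr p
           - p * norm a powr (p - 2) * (a \<bullet> grad \<phi> x)\<bar> \<le> 6 * R powr p"
proof -
  have "norm x powr (sigma p + 2) * \<bar>norm (a + grad \<phi> x) powr p - norm a powr p
           - p * norm a powr (p - 2) * (a \<bullet> grad \<phi> x)\<bar>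
      \<le> norm x powr (sigma p + 2) * (6 * norm (grad \<phi> x) powr p)"
    using assms by (intro mult_left_mono norm_add_powr_remainder_bound) auto
  also have "\<dots> \<le> 6 * R powr p"
    using weighted_norm_grad_powr_le_normX[OF assms(1-4)] by simp
  finally show ?thesis .
qed

lemma weighted_kappa_norm_grad_sum_le:
  fixes \<kappa> \<phi> :: "'a::euclidean_space \<Rightarrow> real"
  defines "N \<equiv> real DIM('a)"
  assumes p: "1 < p" and \<xi>: "1 < xi N p" and \<beta>: "0 < beta N p" and t: "0 < t" and \<delta>: "0 < \<delta>"
    and \<phi>: "inX p \<phi>" "normX p \<phi> \<le> R" and x: "x \<in> punct"
    and \<kappa>: "0 \<le> \<kappa> x" "\<kappa> x \<le> K"
    and near: "norm x < \<delta> \<Longrightarrow> \<kappa> x \<le> S" and S: "0 \<le> S"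
  shows "norm x powr (sigma p + 2) * \<bar>\<kappa> x * norm (grad (w p t) x + grad \<phi> x) powr p\<bar>
    \<le> 2 powr p * (K + 1 / beta N p powr (sigma p + 2))
       * (R powr p + S + 1 / (t powr (p / (p - 1)) * \<delta> powr ((N - 1) * p - sigma p - 2)))"
proof -
  define \<rho> a b B T
    where "\<rho> = norm x powr (sigma p + 2)" and "a = grad (w p t) x" and "b = grad \<phi> x"
      and "B = 1 / beta N p powr (sigma p + 2)"
      and "T = 1 / (t powr (p / (p - 1)) * \<delta> powr ((N - 1) * p - sigma p - 2))"
  have B: "\<rho> * norm a powr p \<le> B"
    using weighted_norm_grad_w_le x t p \<beta> by (simp add: \<rho>_def a_def B_def N_def)
  have T: "\<rho> * norm a powr p \<le> T" if "\<delta> \<le> norm x"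
    using weighted_norm_grad_w_le_away x t p \<xi> \<beta> \<delta> that by (simp add: \<rho>_def a_def T_def N_def)
  have R: "\<rho> * norm b powr p \<le> R powr p"
    using weighted_norm_grad_powr_le_normX[OF \<phi> x p] by (simp add: \<rho>_def b_def)
  have nonneg: "0 \<le> \<rho>" "0 \<le> B" "0 \<le> T" "0 \<le> K"
    using \<kappa> \<beta> by (auto simp: \<rho>_def B_def T_def)
  have a_part: "\<kappa> x * (\<rho> * norm a powr p) \<le> B * S + K * T"
  proof (cases "norm x < \<delta>")
    case True
    then have "\<kappa> x * (\<rho> * norm a powr p) \<le> S * B"
      using B \<kappa> near nonneg by (intro mult_mono) auto
    then show ?thesis
      using nonneg by (simp add: mult.commute add_increasing2)
  next
    case False
    then have "\<kappa> x * (\<rho> * norm a powr p) \<le> K * T"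
      using T \<kappa> nonneg by (intro mult_mono) auto
    then show ?thesis
      using nonneg S by (simp add: add_increasing)
  qed
  have b_part: "\<kappa> x * (\<rho> * norm b powr p) \<le> K * R powr p"
    using R \<kappa> nonneg by (intro mult_mono) auto
  have "\<rho> * \<bar>\<kappa> x * norm (a + b) powr p\<bar> = \<kappa> x * (\<rho> * norm (a + b) powr p)"
    using \<kappa> by simp
  also have "\<dots> \<le> \<kappa> x * (\<rho> * (2 powr p * (norm a powr p + norm b powr p)))"
    using norm_add_powr_le[of p a b] p \<kappa> nonneg by (intro mult_left_mono) auto
  also have "\<dots> = 2 powr p * (\<kappa> x * (\<rho> * norm a powr p) + \<kappa> x * (\<rho> * norm b powr p))"
    by (simp add: algebra_simps)
  also have "\<dots> \<le> 2 powr p * (B * S + K * T + K * R powr p)"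
    using a_part b_part by (intro mult_left_mono add_mono) auto
  also have "\<dots> \<le> 2 powr p * (K + B) * (R powr p + S + T)"
    using nonneg S by (simp add: algebra_simps mult_left_mono)
  finally show ?thesis
    by (simp add: \<rho>_def a_def b_def B_def T_def)
qed

theorem lemma3p2:
  fixes \<kappa> :: "'a::euclidean_space \<Rightarrow> real" and p :: real
  defines "N \<equiv> real DIM('a)"
  assumes N3: "DIM('a) \<ge> 3"
    and p_lo: "N / (N - 1) < p" and p_hi: "p < 2"
    and kcont: "continuous_on (cball 0 1) \<kappa>"
    and knn: "\<forall>x\<in>cball 0 1. \<kappa> x \<ge> 0"
    and k0: "\<kappa> 0 = 0"
  shows "\<exists>C>0. \<forall>R \<delta> t (\<phi>::'a \<Rightarrow> real).
           0 < R \<and> R < 1 \<and> 0 < \<delta> \<and> \<delta> < 1 \<and> t > 1 \<and> inX p \<phi> \<and> normX p \<phi> \<le> R \<longrightarrow>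
           (inY p (\<lambda>x. \<kappa> x * norm (grad (w p t) x + grad \<phi> x) powr p)
            \<and> normY p (\<lambda>x. \<kappa> x * norm (grad (w p t) x + grad \<phi> x) powr p)
              \<le> C * (R powr p + (SUP z\<in>ball 0 \<delta>. \<bar>\<kappa> z\<bar>)
                     + 1 / (t powr (p / (p - 1)) * \<delta> powr ((N - 1) * p - sigma p - 2))))
           \<and> (inY p (\<lambda>x. norm (grad (w p t) x + grad \<phi> x) powr p - norm (grad (w p t) x) powr p
                   - p * norm (grad (w p t) x) powr (p - 2) * (grad (w p t) x \<bullet> grad \<phi> x))
              \<and> normY p (\<lambda>x. norm (grad (w p t) x + grad \<phi> x) powr p - norm (grad (w p t) x) powr p
                   - p * norm (grad (w p t) x) powr (p - 2) * (grad (w p t) x \<bullet> grad \<phi> x))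
                \<le> C * R powr p)"
proof -
  have p: "1 < p" and \<xi>: "1 < xi (real DIM('a)) p" and \<beta>: "0 < beta (real DIM('a)) p"
    using one_lt_xi[OF _ p_lo] N3 by (auto simp: N_def)
  obtain K where K: "\<forall>x\<in>cball 0 1. \<bar>\<kappa> x\<bar> \<le> K"
    using compact_imp_bounded[OF compact_continuous_image[OF kcont compact_cball]]
    by (auto simp: bounded_iff)
  define C where "C = 2 powr p * (K + 1 / beta (real DIM('a)) p powr (sigma p + 2)) + 6"
  have C: "0 < C" "2 powr p * (K + 1 / beta (real DIM('a)) p powr (sigma p + 2)) \<le> C" "6 \<le> C"
    using K[rule_format, of 0] \<beta> by (auto simp: C_def add_nonneg_pos)
  have \<kappa>: "0 \<le> \<kappa> x" "\<kappa> x \<le> K" if "x \<in> punct" for x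
    using that K knn by (auto simp: punct_def)
  show ?thesis
  proof (intro exI[of _ C] conjI[OF \<open>0 < C\<close>] allI impI, rule conjI)
    fix R \<delta> t :: real and \<phi> :: "'a \<Rightarrow> real"
    assume "0 < R \<and> R < 1 \<and> 0 < \<delta> \<and> \<delta> < 1 \<and> 1 < t \<and> inX p \<phi> \<and> normX p \<phi> \<le> R"
    then have \<delta>: "0 < \<delta>" "\<delta> < 1" and t: "0 < t" and \<phi>: "inX p \<phi>" "normX p \<phi> \<le> R"
      by auto
    define S where "S = (SUP z\<in>ball 0 \<delta>. \<bar>\<kappa> z\<bar>)"
    have S: "\<kappa> x \<le> S" if "norm x < \<delta>" for x :: 'a
      using that \<delta> K unfolding S_def by (force intro!: cSUP_upper2[of _ _ x] bdd_aboveI2[of _ _ K])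
    have "0 \<le> S"
      using S[of 0] \<delta> k0 by simp
    show "inY p (\<lambda>x. \<kappa> x * norm (grad (w p t) x + grad \<phi> x) powr p)
      \<and> normY p (\<lambda>x. \<kappa> x * norm (grad (w p t) x + grad \<phi> x) powr p)
          \<le> C * (R powr p + (SUP z\<in>ball 0 \<delta>. \<bar>\<kappa> z\<bar>)
                 + 1 / (t powr (p / (p - 1)) * \<delta> powr ((N - 1) * p - sigma p - 2)))"
      unfolding S_def[symmetric] N_def
      by (intro inY_normY_le order_trans[OF weighted_kappa_norm_grad_sum_le[where \<kappa> = \<kappa>,
            OF p \<xi> \<beta> t \<delta>(1) \<phi> _ \<kappa> S \<open>0 \<le> S\<close>]] mult_right_mono C(2))
        (use \<open>0 \<le> S\<close> in auto)
    show "inY p (\<lambda>x. norm (grad (w p t) x + grad \<phi> x) powr p - norm (grad (w p t) x) powr p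
             - p * norm (grad (w p t) x) powr (p - 2) * (grad (w p t) x \<bullet> grad \<phi> x))
      \<and> normY p (\<lambda>x. norm (grad (w p t) x + grad \<phi> x) powr p - norm (grad (w p t) x) powr p
             - p * norm (grad (w p t) x) powr (p - 2) * (grad (w p t) x \<bullet> grad \<phi> x))
          \<le> C * R powr p"
      using weighted_norm_add_powr_remainder_le[OF \<phi> _ p] p_hi C
      by (intro inY_normY_le order_trans[OF _ mult_right_mono[of 6 C]]) auto
  qed
qed

end
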